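(* Let $F$ be an almost-bipartite graph. Every graph in $\mathcal{M}_F$ is either an empty (edgeless) graph, or a non-empty graph with fewer than $|F|$ vertices. In particular, up to isomorphism there are only finitely many non-empty graphs in $\mathcal{M}_F$.
   Context: All graphs are finite and simple. A graph $F$ is almost-bipartite if it can be made bipartite by removing at most one edge. For such $F$, $\mathcal{A}_F$ is the family of subgraphs of $F$ induced by $V(F)\setminus I$, where $I$ ranges over all maximal independent sets of $F$; $\mathcal{M}_F$ is the family of all graphs (possibly with isolated vertices) that contain no subgraph isomorphic to any member of $\mathcal{A}_F$. $|F|$ is the number of vertices of $F$. *)

theory Defs
  imports Main
begin

definition graph :: "'a set \<Rightarrow> 'a set set \<Rightarrow> bool" where
  "graph V E \<longleftrightarrow> finite V \<and> (\<forall>e\<in>E. e \<subseteq> V \<and> card e = 2)"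

definition bipartite :: "'a set \<Rightarrow> 'a set set \<Rightarrow> bool" where
  "bipartite V E \<longleftrightarrow> (\<exists>A. A \<subseteq> V \<and> (\<forall>e\<in>E. card (e \<inter> A) = 1))"

definition almost_bipartite :: "'a set \<Rightarrow> 'a set set \<Rightarrow> bool" where
  "almost_bipartite V E \<longleftrightarrow> bipartite V E \<or> (\<exists>e\<in>E. bipartite V (E - {e}))"

definition independent :: "'a set \<Rightarrow> 'a set set \<Rightarrow> 'a set \<Rightarrow> bool" where
  "independent V E I \<longleftrightarrow> I \<subseteq> V \<and> (\<forall>e\<in>E. \<not> e \<subseteq> I)"

definition maximal_independent :: "'a set \<Rightarrow> 'a set set \<Rightarrow> 'a set \<Rightarrow> bool" where
  "maximal_independent V E I \<longleftrightarrow> independent V E I \<and>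
     (\<forall>J. independent V E J \<and> I \<subseteq> J \<longrightarrow> J = I)"

definition induced_edges :: "'a set set \<Rightarrow> 'a set \<Rightarrow> 'a set set" where
  "induced_edges E S = {e\<in>E. e \<subseteq> S}"

definition contains_copy :: "'b set \<Rightarrow> 'b set set \<Rightarrow> 'a set \<Rightarrow> 'a set set \<Rightarrow> bool" where
  "contains_copy V E W D \<longleftrightarrow>
     (\<exists>f. inj_on f W \<and> f ` W \<subseteq> V \<and> (\<forall>e\<in>D. f ` e \<in> E))"

definition A_family :: "'a set \<Rightarrow> 'a set set \<Rightarrow> ('a set \<times> 'a set set) set" where
  "A_family VF EF = {(VF - I, induced_edges EF (VF - I)) | I. maximal_independent VF EF I}"

definition in_M :: "'a set \<Rightarrow> 'a set set \<Rightarrow> 'b set \<Rightarrow> 'b set set \<Rightarrow> bool" where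
  "in_M VF EF V E \<longleftrightarrow> graph V E \<and> (\<forall>(W, D)\<in>A_family VF EF. \<not> contains_copy V E W D)"

definition graph_iso :: "'a set \<Rightarrow> 'a set set \<Rightarrow> 'b set \<Rightarrow> 'b set set \<Rightarrow> bool" where
  "graph_iso V E W D \<longleftrightarrow> (\<exists>f. bij_betw f V W \<and>
     (\<forall>x\<in>V. \<forall>y\<in>V. {x, y} \<in> E \<longleftrightarrow> {f x, f y} \<in> D))"

end

theory Submission
  imports Defs
begin

text \<open>An almost-bipartite graph F has a bipartition A, V(F) - A in which every edge
  but at most one, e0, crosses. Both sides then induce at most the edge e0, so one of
  them is independent and the other induces at most one edge; extending that independent
  set to a maximal one I leaves a member F[V(F) - I] of the family A_F with at most one edge.
  Any graph with an edge and at least |F| vertices contains a copy of such a graph: map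
  its edge onto the given edge and the remaining vertices injectively anywhere. The
  finitely many non-empty graphs of M_F are then represented by graphs on initial
  segments of the naturals below |F|.\<close>

lemma graph_induced_edges:
  assumes "graph V E" "S \<subseteq> V"
  shows "graph S (induced_edges E S)"
  using assms finite_subset unfolding graph_def induced_edges_def by blast

lemma graph_edgeE:
  assumes "graph V E" "e \<in> E"
  obtains x y where "e = {x, y}" "x \<noteq> y" "x \<in> V" "y \<in> V"
proof -
  have "card e = 2" "e \<subseteq> V" using assms unfolding graph_def by auto
  then show ?thesis using that by (auto simp: card_2_iff)
qed

lemma induced_edges_mono: "S \<subseteq> T \<Longrightarrow> induced_edges E S \<subseteq> induced_edges E T"
  unfolding induced_edges_def by blast

lemma independent_iff_induced_edges_empty:
  "independent V E I \<longleftrightarrow> I \<subseteq> V \<and> induced_edges E I = {}"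
  unfolding independent_def induced_edges_def by blast

lemma independent_extends_to_maximal:
  assumes "finite V" "independent V E X"
  shows "\<exists>I. maximal_independent V E I \<and> X \<subseteq> I"
proof -
  define C where "C = {J. independent V E J \<and> X \<subseteq> J}"
  have "finite C"
    unfolding C_def independent_def using assms(1) by (auto intro: finite_subset[of _ "Pow V"])
  moreover have "X \<in> C"
    unfolding C_def using assms(2) by simp
  ultimately obtain I where "I \<in> C" and max: "\<forall>J\<in>C. I \<subseteq> J \<longrightarrow> I = J"
    using finite_has_maximal2 by blast
  then have "maximal_independent V E I"
    unfolding maximal_independent_def C_def by (metis mem_Collect_eq order.trans)
  then show ?thesis using \<open>I \<in> C\<close> unfolding C_def by blast
qed

lemma almost_bipartite_split:
  assumes "graph V E" "almost_bipartite V E"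
  shows "\<exists>A e0. A \<subseteq> V \<and> induced_edges E A \<subseteq> {e0} \<and> induced_edges E (V - A) \<subseteq> {e0}"
proof -
  \<comment> \<open>if V, E is bipartite, any e0 will do\<close>
  obtain A e0 where "A \<subseteq> V" and crossing: "\<forall>e\<in>E - {e0}. card (e \<inter> A) = 1"
    using assms(2) unfolding almost_bipartite_def bipartite_def by blast
  have "induced_edges E A \<subseteq> {e0}"
  proof
    fix e assume "e \<in> induced_edges E A"
    then have "e \<in> E" "e \<inter> A = e" unfolding induced_edges_def by auto
    moreover have "card e = 2" using assms(1) \<open>e \<in> E\<close> unfolding graph_def by blast
    ultimately have "\<not> card (e \<inter> A) = 1" by simp
    then show "e \<in> {e0}" using crossing \<open>e \<in> E\<close> by blast
  qed
  moreover have "induced_edges E (V - A) \<subseteq> {e0}"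
  proof
    fix e assume "e \<in> induced_edges E (V - A)"
    then have "e \<in> E" "e \<inter> A = {}" unfolding induced_edges_def by auto
    then have "\<not> card (e \<inter> A) = 1" by simp
    then show "e \<in> {e0}" using crossing \<open>e \<in> E\<close> by blast
  qed
  ultimately show ?thesis using \<open>A \<subseteq> V\<close> by blast
qed

lemma almost_bipartite_maximal_independent:
  assumes "graph V E" "almost_bipartite V E"
  shows "\<exists>I e0. maximal_independent V E I \<and> induced_edges E (V - I) \<subseteq> {e0}"
proof -
  obtain A e0 where A: "A \<subseteq> V" "induced_edges E A \<subseteq> {e0}" "induced_edges E (V - A) \<subseteq> {e0}"
    using almost_bipartite_split[OF assms] by blast
  have "\<exists>X. independent V E X \<and> induced_edges E (V - X) \<subseteq> {e0}"
  proof (cases "e0 \<in> induced_edges E A")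
    case True
    then have "e0 \<noteq> {}" "e0 \<subseteq> A"
      using assms(1) unfolding graph_def induced_edges_def by auto
    then have "e0 \<notin> induced_edges E (V - A)"
      unfolding induced_edges_def by blast
    then have "independent V E (V - A)"
      using A(3) unfolding independent_iff_induced_edges_empty by blast
    moreover have "V - (V - A) = A" using A(1) by blast
    ultimately show ?thesis using A(2) by metis
  next
    case False
    then have "independent V E A"
      using A(1,2) unfolding independent_iff_induced_edges_empty by blast
    then show ?thesis using A(3) by blast
  qed
  then obtain X where X: "independent V E X" "induced_edges E (V - X) \<subseteq> {e0}"
    by blast
  have "finite V" using assms(1) unfolding graph_def by simp
  then obtain I where "maximal_independent V E I" "X \<subseteq> I"
    using independent_extends_to_maximal X(1) by blast
  moreover have "induced_edges E (V - I) \<subseteq> {e0}"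
    using induced_edges_mono[of "V - I" "V - X" E] \<open>X \<subseteq> I\<close> X(2) by blast
  ultimately show ?thesis by blast
qed

lemma inj_on_extend_card_le:
  assumes "finite W" "finite V" "S \<subseteq> W" "inj_on h S" "h ` S \<subseteq> V" "card W \<le> card V"
  shows "\<exists>f. inj_on f W \<and> f ` W \<subseteq> V \<and> (\<forall>z\<in>S. f z = h z)"
proof -
  have "finite S" using assms(1,3) finite_subset by blast
  then have "card (W - S) \<le> card (V - h ` S)"
    using assms by (simp add: card_Diff_subset card_image finite_subset)
  then obtain g where g: "inj_on g (W - S)" "g ` (W - S) \<subseteq> V - h ` S"
    using card_le_inj[of "W - S" "V - h ` S"] assms(1,2) by auto
  define f where "f z = (if z \<in> S then h z else g z)" for z
  have "inj_on f S" using assms(4) by (simp add: f_def inj_on_def)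
  moreover have "inj_on f (W - S)" using g(1) by (simp add: f_def inj_on_def)
  moreover have "f ` S \<inter> f ` (W - S) = {}" using g(2) by (auto simp: f_def)
  moreover have "S \<union> (W - S) = W" using assms(3) by blast
  ultimately have "inj_on f W" by (metis Diff_disjoint Diff_triv inj_on_Un)
  moreover have "f ` W \<subseteq> V" using g(2) assms(5) by (auto simp: f_def)
  moreover have "\<forall>z\<in>S. f z = h z" by (simp add: f_def)
  ultimately show ?thesis by blast
qed

lemma contains_copy_at_most_one_edge:
  assumes "graph W D" "D \<subseteq> {d}" "graph V E" "E \<noteq> {}" "card W \<le> card V"
  shows "contains_copy V E W D"
proof -
  have fin: "finite W" "finite V" using assms(1,3) unfolding graph_def by simp_all
  show ?thesis
  proof (cases "D = {}")
    case True
    moreover obtain f where "inj_on f W" "f ` W \<subseteq> V"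
      using card_le_inj[OF fin assms(5)] by blast
    ultimately show ?thesis unfolding contains_copy_def by blast
  next
    case False
    then have "D = {d}" using assms(2) by blast
    then obtain x y where xy: "d = {x, y}" "x \<noteq> y" "{x, y} \<subseteq> W"
      using assms(1) graph_edgeE by (metis empty_subsetI insert_subset singletonI)
    obtain e where "e \<in> E" using assms(4) by blast
    then obtain p q where pq: "e = {p, q}" "p \<noteq> q" "{p, q} \<subseteq> V"
      using assms(3) graph_edgeE by (metis empty_subsetI insert_subset)
    define h where "h z = (if z = x then p else q)" for z
    have h: "inj_on h {x, y}" "h ` {x, y} \<subseteq> V"
      using xy(2) pq(2,3) by (auto simp: h_def)
    obtain f where f: "inj_on f W" "f ` W \<subseteq> V" "\<forall>z\<in>{x, y}. f z = h z"
      using inj_on_extend_card_le[OF fin xy(3) h assms(5)] by blast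
    then have "f ` d = e" using xy pq by (simp add: h_def)
    then show ?thesis
      unfolding contains_copy_def using f(1,2) \<open>D = {d}\<close> \<open>e \<in> E\<close> by blast
  qed
qed

lemma in_M_edgeless_or_small:
  assumes "graph VF EF" "almost_bipartite VF EF" "in_M VF EF V E"
  shows "E = {} \<or> card V < card VF"
proof (rule ccontr)
  assume "\<not> (E = {} \<or> card V < card VF)"
  then have "E \<noteq> {}" "card VF \<le> card V" by auto
  obtain I e0 where I: "maximal_independent VF EF I" "induced_edges EF (VF - I) \<subseteq> {e0}"
    using almost_bipartite_maximal_independent[OF assms(1,2)] by blast
  let ?W = "VF - I" and ?D = "induced_edges EF (VF - I)"
  have "(?W, ?D) \<in> A_family VF EF"
    unfolding A_family_def using I(1) by blast
  then have "\<not> contains_copy V E ?W ?D"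
    using assms(3) unfolding in_M_def by blast
  moreover have "contains_copy V E ?W ?D"
  proof (rule contains_copy_at_most_one_edge)
    show "graph ?W ?D" using graph_induced_edges[OF assms(1)] by blast
    show "graph V E" using assms(3) unfolding in_M_def by blast
    show "card ?W \<le> card V"
      using assms(1) \<open>card VF \<le> card V\<close> unfolding graph_def
      by (meson Diff_subset card_mono le_trans)
  qed (use I(2) \<open>E \<noteq> {}\<close> in auto)
  ultimately show False by contradiction
qed

lemma graph_iso_image:
  assumes "graph V E" "inj_on h V"
  shows "graph_iso V E (h ` V) ((`) h ` E)"
  unfolding graph_iso_def
proof (intro exI conjI ballI)
  show "bij_betw h V (h ` V)" using assms(2) by (simp add: bij_betw_imageI)
  fix x y assume "x \<in> V" "y \<in> V"
  have "e = {x, y}" if "e \<in> E" "h ` e = h ` {x, y}" for e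
  proof -
    have "e \<subseteq> V" using assms(1) that(1) unfolding graph_def by auto
    then show ?thesis
      using inj_on_image_eq_iff[OF assms(2) \<open>e \<subseteq> V\<close>, of "{x, y}"] that(2)
        \<open>x \<in> V\<close> \<open>y \<in> V\<close> by simp
  qed
  then have "{x, y} \<in> E \<longleftrightarrow> h ` {x, y} \<in> (`) h ` E" by auto
  then show "{x, y} \<in> E \<longleftrightarrow> {h x, h y} \<in> (`) h ` E" by simp
qed

lemma graph_iso_nat_graph:
  assumes "graph V E"
  shows "\<exists>D. D \<subseteq> Pow {0..<card V} \<and> graph_iso V E {0..<card V} D"
proof -
  have "finite V" using assms unfolding graph_def by simp
  then obtain h where h: "bij_betw h V {0..<card V}"
    using ex_bij_betw_finite_nat by blast
  have "e \<subseteq> V" if "e \<in> E" for e using assms that unfolding graph_def by auto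
  then have "(`) h ` E \<subseteq> Pow {0..<card V}"
    using bij_betw_imp_surj_on[OF h] by blast
  moreover have "graph_iso V E {0..<card V} ((`) h ` E)"
    using graph_iso_image[OF assms bij_betw_imp_inj_on[OF h]] bij_betw_imp_surj_on[OF h]
    by simp
  ultimately show ?thesis by blast
qed

theorem lemma4p1:
  fixes VF :: "'a set" and EF :: "'a set set"
  assumes "graph VF EF" and "almost_bipartite VF EF"
  shows "(\<forall>(V :: 'b set) E. in_M VF EF V E \<longrightarrow> E = {} \<or> card V < card VF)
    \<and> (\<exists>S :: (nat set \<times> nat set set) set. finite S \<and>
         (\<forall>(V :: 'b set) E. in_M VF EF V E \<and> E \<noteq> {} \<longrightarrow>
            (\<exists>(W, D)\<in>S. graph_iso V E W D)))"
proof (intro conjI exI)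
  show small: "\<forall>(V :: 'b set) E. in_M VF EF V E \<longrightarrow> E = {} \<or> card V < card VF"
    using in_M_edgeless_or_small[OF assms] by blast
  let ?S = "Pow {0..<card VF} \<times> Pow (Pow {0..<card VF})"
  show "finite ?S" by simp
  show "\<forall>(V :: 'b set) E. in_M VF EF V E \<and> E \<noteq> {} \<longrightarrow> (\<exists>(W, D)\<in>?S. graph_iso V E W D)"
  proof (intro allI impI)
    fix V :: "'b set" and E assume "in_M VF EF V E \<and> E \<noteq> {}"
    then have "graph V E" "card V < card VF"
      using small unfolding in_M_def by auto
    then obtain D where "D \<subseteq> Pow {0..<card V}" "graph_iso V E {0..<card V} D"
      using graph_iso_nat_graph by blast
    moreover have "{0..<card V} \<subseteq> {0..<card VF}" using \<open>card V < card VF\<close> by auto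
    ultimately show "\<exists>(W, D)\<in>?S. graph_iso V E W D" by blast
  qed
qed

end
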